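(* Fix a prompt $x$ and integers $n\ge k\ge 2$. Assume the law of $R(x,y)$ under $y\sim\pi_\theta(\cdot|x)$ has no atoms (so the rewards of independent samples are almost surely pairwise distinct). Let $y^1,\dots,y^n$ be i.i.d. samples from $\pi_\theta(\cdot|x)$, relabeled so that $R(x,y^1)<R(x,y^2)<\dots<R(x,y^n)$. Define $$\hat G=\frac{k}{n}\sum_{i=1}^n\left[R(x,y^i)\frac{\binom{i-1}{k-1}}{\binom{n-1}{k-1}}-\frac{k-1}{n-1}\sum_{j=1}^{i-1}R(x,y^j)\frac{\binom{j-1}{k-2}}{\binom{n-2}{k-2}}\right]\nabla_\theta\log\pi_\theta(y^i\mid x).$$ Then more precisely $$\mathbb{E}\Big[\tfrac1n\sum_{i=1}^n R(x,y^i)\tfrac{\binom{i-1}{k-1}}{\binom{n-1}{k-1}}\nabla_\theta\log\pi_\theta(y^i|x)\Big]=\mathbb{E}_{y}\big[R(x,y)P_{\le,\theta}(y)^{k-1}\nabla_\theta\log\pi_\theta(y|x)\big],$$ $$\mathbb{E}\Big[\tfrac1n\sum_{i=1}^n\tfrac{k-1}{n-1}\sum_{j=1}^{i-1}R(x,y^j)\tfrac{\binom{j-1}{k-2}}{\binom{n-2}{k-2}}\nabla_\theta\log\pi_\theta(y^i|x)\Big]=\mathbb{E}_{y}\big[(k-1)g(y)\nabla_\theta\log\pi_\theta(y|x)\big],$$ and hence $$\mathbb{E}[\hat G]=k\,\mathbb{E}_{y\sim\pi_\theta(\cdot|x)}\Big[\big(R(x,y)P_{\le,\theta}(y)^{k-1}-(k-1)g(y)\big)\nabla_\theta\log\pi_\theta(y\mid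 x)\Big].$$
   Context: $\pi_\theta(\cdot\mid x)$ is a probability distribution on a measurable response space, with density $\pi_\theta(y\mid x)$ with respect to a fixed $\sigma$-finite measure, differentiable in $\theta$; $R(x,y)$ is a bounded real-valued reward, and all expectations involved are assumed finite. For a response $y$, $P_{\le,\theta}(y)=\Pr_{y'\sim\pi_\theta(\cdot|x)}[R(x,y')\le R(x,y)]$, and $g(y)=\mathbb{E}_{y'\sim\pi_\theta(\cdot|x)}\big[R(x,y')\,P_{\le,\theta}(y')^{k-2}\,\mathbf 1\{R(x,y')<R(x,y)\}\big]$. Binomial coefficients use $\binom{p}{q}=0$ for $q>p$ or $q<0$. *)

theory Defs
  imports "HOL-Probability.Probability"
begin

definition policy :: "'a measure \<Rightarrow> ('p \<Rightarrow> 'x \<Rightarrow> 'a \<Rightarrow> real) \<Rightarrow> 'p \<Rightarrow> 'x \<Rightarrow> 'a measure" where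
  "policy M p \<theta> x = density M (\<lambda>y. ennreal (p \<theta> x y))"

definition P_le :: "'a measure \<Rightarrow> ('a \<Rightarrow> real) \<Rightarrow> 'a \<Rightarrow> real" where
  "P_le P r y = measure P {y' \<in> space P. r y' \<le> r y}"

definition g_fun :: "'a measure \<Rightarrow> ('a \<Rightarrow> real) \<Rightarrow> nat \<Rightarrow> 'a \<Rightarrow> real" where
  "g_fun P r k y = (\<integral>y'. r y' * P_le P r y' ^ (k - 2) * indicator {y''. r y'' < r y} y' \<partial>P)"

text \<open>Order statistics: the samples omega 0, ..., omega (n-1) relabeled so that their
  r-values are increasing; 1-based: ordered_sample r n omega i = y^i for 1 <= i <= n.\<close>
definition ordered_sample :: "('a \<Rightarrow> real) \<Rightarrow> nat \<Rightarrow> (nat \<Rightarrow> 'a) \<Rightarrow> nat \<Rightarrow> 'a" where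
  "ordered_sample r n \<omega> i = sort_key r (map \<omega> [0..<n]) ! (i - 1)"

definition term1 :: "('a \<Rightarrow> real) \<Rightarrow> ('a \<Rightarrow> 'p::real_vector) \<Rightarrow> nat \<Rightarrow> nat \<Rightarrow> (nat \<Rightarrow> 'a) \<Rightarrow> 'p" where
  "term1 r s n k \<omega> = (1 / real n) *\<^sub>R (\<Sum>i=1..n.
      (r (ordered_sample r n \<omega> i) * (real ((i - 1) choose (k - 1)) / real ((n - 1) choose (k - 1))))
        *\<^sub>R s (ordered_sample r n \<omega> i))"

definition term2 :: "('a \<Rightarrow> real) \<Rightarrow> ('a \<Rightarrow> 'p::real_vector) \<Rightarrow> nat \<Rightarrow> nat \<Rightarrow> (nat \<Rightarrow> 'a) \<Rightarrow> 'p" where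
  "term2 r s n k \<omega> = (1 / real n) *\<^sub>R (\<Sum>i=1..n.
      ((real k - 1) / (real n - 1) * (\<Sum>j=1..<i. r (ordered_sample r n \<omega> j)
          * (real ((j - 1) choose (k - 2)) / real ((n - 2) choose (k - 2)))))
        *\<^sub>R s (ordered_sample r n \<omega> i))"

definition G_hat :: "('a \<Rightarrow> real) \<Rightarrow> ('a \<Rightarrow> 'p::real_vector) \<Rightarrow> nat \<Rightarrow> nat \<Rightarrow> (nat \<Rightarrow> 'a) \<Rightarrow> 'p" where
  "G_hat r s n k \<omega> = (real k / real n) *\<^sub>R (\<Sum>i=1..n.
      (r (ordered_sample r n \<omega> i) * (real ((i - 1) choose (k - 1)) / real ((n - 1) choose (k - 1)))
       - (real k - 1) / (real n - 1) * (\<Sum>j=1..<i. r (ordered_sample r n \<omega> j)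
          * (real ((j - 1) choose (k - 2)) / real ((n - 2) choose (k - 2)))))
        *\<^sub>R s (ordered_sample r n \<omega> i))"

end

(*
  Once the rewards of the n samples are distinct (almost surely, as their law has no atoms),
  the sample of rank i has exactly i - 1 samples below it, so its weight C(i-1, k-1) counts the
  (k-1)-subsets S of the samples with smaller reward.  The first term therefore becomes a sum,
  over a sample a and such a set S, of the product of the indicators 1{r(y_b) < r(y_a)}, b in S,
  times r(y_a) s(y_a).  By independence, integrating out the coordinates in S first, each summand
  has expectation E[r(y) F(y)^(k-1) s(y)] with F(y) = Pr[r(y') < r(y)] = P_le(y), and there are
  n C(n-1, k-1) summands.  The second term is expanded in the same way into sums over a, a
  sample b below a and a (k-2)-subset below b; each summand has expectation E[g(y) s(y)].
*)
theory Submission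
  imports Defs
begin

section \<open>Integrals over finite powers of a probability space\<close>

lemma (in product_sigma_finite) integral_PiM_insert_rev:
  fixes f :: "_ \<Rightarrow> 'b::{banach,second_countable_topology}"
  assumes I: "finite I" "i \<notin> I" and f_int: "integrable (PiM (insert i I) M) f"
  shows "integral\<^sup>L (PiM (insert i I) M) f = (\<integral>y. \<integral>x. f (x(i := y)) \<partial>PiM I M \<partial>M i)"
proof -
  interpret I: finite_product_sigma_finite M I by standard (rule I(1))
  interpret pair_sigma_finite "PiM I M" "M i"
    by (intro pair_sigma_finite.intro I.sigma_finite_measure_axioms sigma_finite_measures)
  have [measurable]: "f \<in> borel_measurable (PiM (insert i I) M)"
    using f_int by auto
  have swap_meas: "(\<lambda>(x, y). f (x(i := y))) \<in> borel_measurable (PiM I M \<Otimes>\<^sub>M M i)"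
    using measurable_add_dim[of i I M] by (simp add: split_beta')
  have "(\<integral>\<^sup>+ z. norm (case z of (x, y) \<Rightarrow> f (x(i := y))) \<partial>(PiM I M \<Otimes>\<^sub>M M i))
      = (\<integral>\<^sup>+ y. \<integral>\<^sup>+ x. norm (f (x(i := y))) \<partial>PiM I M \<partial>M i)"
    using swap_meas by (subst nn_integral_snd[symmetric]) (auto simp: split_beta')
  also have "\<dots> = (\<integral>\<^sup>+ \<omega>. norm (f \<omega>) \<partial>PiM (insert i I) M)"
    using I by (intro product_nn_integral_insert_rev[symmetric]) auto
  finally have "integrable (PiM I M \<Otimes>\<^sub>M M i) (\<lambda>(x, y). f (x(i := y)))"
    using f_int swap_meas by (simp add: integrable_iff_bounded)
  then have "(\<integral>x. \<integral>y. f (x(i := y)) \<partial>M i \<partial>PiM I M) = (\<integral>y. \<integral>x. f (x(i := y)) \<partial>PiM I M \<partial>M i)"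
    by (rule Fubini_integral[symmetric])
  with product_integral_insert[OF I f_int] show ?thesis
    by simp
qed

lemma (in product_sigma_finite) has_bochner_integral_PiM_insert_rev:
  fixes f :: "_ \<Rightarrow> 'b::{banach,second_countable_topology}"
  assumes I: "finite I" "i \<notin> I"
    and f_meas: "f \<in> borel_measurable (PiM (insert i I) M)"
    and inner: "\<And>y. y \<in> space (M i) \<Longrightarrow> has_bochner_integral (PiM I M) (\<lambda>x. f (x(i := y))) (G y)"
    and inner_norm: "integrable (M i) (\<lambda>y. \<integral>x. norm (f (x(i := y))) \<partial>PiM I M)"
  shows "has_bochner_integral (PiM (insert i I) M) f (\<integral>y. G y \<partial>M i)"
proof -
  have "(\<integral>\<^sup>+ \<omega>. norm (f \<omega>) \<partial>PiM (insert i I) M) = (\<integral>\<^sup>+ y. \<integral>\<^sup>+ x. norm (f (x(i := y))) \<partial>PiM I M \<partial>M i)"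
    using I f_meas by (intro product_nn_integral_insert_rev) auto
  also have "\<dots> = (\<integral>\<^sup>+ y. ennreal (\<integral>x. norm (f (x(i := y))) \<partial>PiM I M) \<partial>M i)"
    using inner by (intro nn_integral_cong nn_integral_eq_integral) (auto simp: has_bochner_integral_iff)
  also have "\<dots> < \<infinity>"
    using inner_norm by (simp add: integrable_iff_bounded)
  finally have f_int: "integrable (PiM (insert i I) M) f"
    using f_meas by (simp add: integrable_iff_bounded)
  have "integral\<^sup>L (PiM (insert i I) M) f = (\<integral>y. G y \<partial>M i)"
    using inner by (simp add: integral_PiM_insert_rev[OF I f_int] has_bochner_integral_iff
        cong: Bochner_Integration.integral_cong)
  with f_int show ?thesis
    by (simp add: has_bochner_integral_iff)
qed

lemma (in prob_space) integrable_kernel_section: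
  fixes q :: "'a \<Rightarrow> 'a \<Rightarrow> real"
  assumes "case_prod q \<in> borel_measurable (M \<Otimes>\<^sub>M M)" "\<And>y'. 0 \<le> q y y'" "\<And>y'. q y y' \<le> 1"
    and "y \<in> space M"
  shows "integrable M (q y)"
proof (rule integrable_const_bound[where B=1])
  show "q y \<in> borel_measurable M"
    using measurable_Pair2[OF assms(1,4)] by simp
qed (use assms(2,3) in auto)

lemma (in prob_space) integral_kernel_section_bounds:
  fixes q :: "'a \<Rightarrow> 'a \<Rightarrow> real"
  assumes "case_prod q \<in> borel_measurable (M \<Otimes>\<^sub>M M)" "\<And>y'. 0 \<le> q y y'" "\<And>y'. q y y' \<le> 1"
    and "y \<in> space M"
  shows "0 \<le> (\<integral>y'. q y y' \<partial>M)" and "(\<integral>y'. q y y' \<partial>M) \<le> 1"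
proof -
  show "0 \<le> (\<integral>y'. q y y' \<partial>M)"
    using assms(2) by (simp add: integral_nonneg)
  have "(\<integral>y'. q y y' \<partial>M) \<le> (\<integral>y'. 1 \<partial>M)"
    using integrable_kernel_section[OF assms] assms(3) by (intro integral_mono) auto
  then show "(\<integral>y'. q y y' \<partial>M) \<le> 1"
    by (simp add: prob_space)
qed

lemma has_bochner_integral_PiM_prod_power:
  fixes g :: "'a \<Rightarrow> real"
  assumes "prob_space P" "finite J" "S \<subseteq> J" "integrable P g"
  shows "has_bochner_integral (PiM J (\<lambda>_. P)) (\<lambda>x. \<Prod>b\<in>S. g (x b)) ((\<integral>y. g y \<partial>P) ^ card S)"
proof -
  interpret product_prob_space "\<lambda>_. P" by (rule product_prob_spaceI) (fact assms(1))
  define f where "f b = (if b \<in> S then g else (\<lambda>_. 1))" for b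
  have f_int: "integrable P (f b)" for b
    using assms(4) by (simp add: f_def)
  have "(\<Prod>b\<in>S. g (x b)) = (\<Prod>b\<in>J. f b (x b))" for x
    using assms(2,3) by (intro prod.mono_neutral_cong_left) (auto simp: f_def)
  moreover have "(\<Prod>b\<in>J. integral\<^sup>L P (f b)) = (\<integral>y. g y \<partial>P) ^ card S"
    using assms(1) by (subst prod.mono_neutral_cong_left[OF assms(2,3), symmetric])
      (auto simp: f_def prob_space.prob_space)
  ultimately show ?thesis
    using product_integrable_prod[OF assms(2) f_int] product_integral_prod[OF assms(2) f_int]
    by (simp add: has_bochner_integral_iff)
qed

lemma has_bochner_integral_PiM_prod_kernel:
  fixes V :: "'a \<Rightarrow> 'b::{banach,second_countable_topology}"
  assumes P_prob: "prob_space P" and I: "finite I" "a \<in> I" "S \<subseteq> I - {a}"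
    and q_meas[measurable]: "case_prod q \<in> borel_measurable (P \<Otimes>\<^sub>M P)"
    and q_nonneg: "\<And>y y'. 0 \<le> q y y'" and q_le_1: "\<And>y y'. q y y' \<le> 1"
    and V_meas[measurable]: "V \<in> borel_measurable P"
    and V_int: "integrable P (\<lambda>y. (\<integral>y'. q y y' \<partial>P) ^ card S *\<^sub>R V y)"
  shows "has_bochner_integral (PiM I (\<lambda>_. P)) (\<lambda>\<omega>. (\<Prod>b\<in>S. q (\<omega> a) (\<omega> b)) *\<^sub>R V (\<omega> a))
           (\<integral>y. (\<integral>y'. q y y' \<partial>P) ^ card S *\<^sub>R V y \<partial>P)"
proof -
  interpret Pr: prob_space P by (fact P_prob)
  interpret product_prob_space "\<lambda>_. P" by (rule product_prob_spaceI) (fact P_prob)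
  define J where "J = I - {a}"
  have J: "finite J" "a \<notin> J" "I = insert a J" "S \<subseteq> J"
    using I by (auto simp: J_def)
  have prod_int: "has_bochner_integral (PiM J (\<lambda>_. P)) (\<lambda>x. \<Prod>b\<in>S. q y (x b)) ((\<integral>y'. q y y' \<partial>P) ^ card S)"
    if "y \<in> space P" for y
    using Pr.integrable_kernel_section[OF q_meas q_nonneg q_le_1 that]
    by (rule has_bochner_integral_PiM_prod_power[OF P_prob J(1,4)])
  define f where "f \<omega> = (\<Prod>b\<in>S. q (\<omega> a) (\<omega> b)) *\<^sub>R V (\<omega> a)" for \<omega>
  have f_upd: "f (x(a := y)) = (\<Prod>b\<in>S. q y (x b)) *\<^sub>R V y" for x y
    using J(2,4) by (auto simp: f_def intro!: prod.cong)
  have "has_bochner_integral (PiM (insert a J) (\<lambda>_. P)) f (\<integral>y. (\<integral>y'. q y y' \<partial>P) ^ card S *\<^sub>R V y \<partial>P)"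
  proof (rule has_bochner_integral_PiM_insert_rev)
    show "f \<in> borel_measurable (PiM (insert a J) (\<lambda>_. P))"
      unfolding f_def by measurable (use J(4) in auto)
    fix y assume y: "y \<in> space P"
    show "has_bochner_integral (PiM J (\<lambda>_. P)) (\<lambda>x. f (x(a := y))) ((\<integral>y'. q y y' \<partial>P) ^ card S *\<^sub>R V y)"
      unfolding f_upd by (rule has_bochner_integral_scaleR_left[OF prod_int[OF y]])
  next
    have norm_eq: "(\<integral>x. norm (f (x(a := y))) \<partial>PiM J (\<lambda>_. P)) = norm ((\<integral>y'. q y y' \<partial>P) ^ card S *\<^sub>R V y)"
      if y: "y \<in> space P" for y
      using has_bochner_integral_integral_eq[OF prod_int[OF y]]
      by (simp add: f_upd q_nonneg prod_nonneg integral_nonneg abs_prod)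
    show "integrable P (\<lambda>y. \<integral>x. norm (f (x(a := y))) \<partial>PiM J (\<lambda>_. P))"
      using integrable_norm[OF V_int] by (subst Bochner_Integration.integrable_cong[OF refl norm_eq])
  qed (use J in auto)
  then show ?thesis
    unfolding f_def[abs_def] J(3) .
qed

lemma has_bochner_integral_PiM_prod_kernel_dominated:
  fixes h :: "'a \<Rightarrow> real"
  assumes P_prob: "prob_space P" and I: "finite I" "b \<in> I" "T \<subseteq> I - {b}"
    and q_meas: "case_prod q \<in> borel_measurable (P \<Otimes>\<^sub>M P)"
    and q_nonneg: "\<And>y y'. 0 \<le> q y y'" and q_le_1: "\<And>y y'. q y y' \<le> 1"
    and h_meas: "h \<in> borel_measurable P" and w_int: "integrable P w" and h_le: "\<And>y'. \<bar>h y'\<bar> \<le> \<bar>w y'\<bar>"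
  shows "has_bochner_integral (PiM I (\<lambda>_. P)) (\<lambda>x. (\<Prod>c\<in>T. q (x b) (x c)) *\<^sub>R h (x b))
           (\<integral>y'. (\<integral>z. q y' z \<partial>P) ^ card T *\<^sub>R h y' \<partial>P)"
proof (rule has_bochner_integral_PiM_prod_kernel[OF P_prob I q_meas q_nonneg q_le_1 h_meas])
  have "\<bar>\<integral>z. q y' z \<partial>P\<bar> ^ card T * \<bar>h y'\<bar> \<le> 1 * \<bar>w y'\<bar>" if "y' \<in> space P" for y'
    using prob_space.integral_kernel_section_bounds[OF P_prob q_meas q_nonneg q_le_1 that] h_le
    by (intro mult_mono power_le_one) auto
  moreover have "(\<lambda>y'. \<integral>z. q y' z \<partial>P) \<in> borel_measurable P"
    using q_meas by (rule sigma_finite_measure.borel_measurable_lebesgue_integral[OF prob_space_imp_sigma_finite[OF P_prob]])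
  ultimately show "integrable P (\<lambda>y'. (\<integral>z. q y' z \<partial>P) ^ card T *\<^sub>R h y')"
    using h_meas by (intro Bochner_Integration.integrable_bound[OF w_int]) (auto simp: abs_mult power_abs)
qed

lemma has_bochner_integral_PiM_prod_kernel_pair:
  fixes V :: "'a \<Rightarrow> 'b::{banach,second_countable_topology}"
  assumes P_prob: "prob_space P" and I: "finite I" "a \<in> I" "b \<in> I" "a \<noteq> b" "T \<subseteq> I - {a, b}"
    and q_meas[measurable]: "case_prod q \<in> borel_measurable (P \<Otimes>\<^sub>M P)"
    and q_nonneg: "\<And>y y'. 0 \<le> q y y'" and q_le_1: "\<And>y y'. q y y' \<le> 1"
    and W_meas[measurable]: "case_prod W \<in> borel_measurable (P \<Otimes>\<^sub>M P)"
    and W_int: "\<And>y. y \<in> space P \<Longrightarrow> integrable P (W y)"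
    and V_meas[measurable]: "V \<in> borel_measurable P"
    and V_int: "integrable P (\<lambda>y. (\<integral>y'. (\<integral>z. q y' z \<partial>P) ^ card T * \<bar>W y y'\<bar> \<partial>P) *\<^sub>R V y)"
  shows "has_bochner_integral (PiM I (\<lambda>_. P)) (\<lambda>\<omega>. ((\<Prod>c\<in>T. q (\<omega> b) (\<omega> c)) * W (\<omega> a) (\<omega> b)) *\<^sub>R V (\<omega> a))
           (\<integral>y. (\<integral>y'. (\<integral>z. q y' z \<partial>P) ^ card T * W y y' \<partial>P) *\<^sub>R V y \<partial>P)"
proof -
  interpret Pr: prob_space P by (fact P_prob)
  interpret product_prob_space "\<lambda>_. P" by (rule product_prob_spaceI) (fact P_prob)
  define J where "J = I - {a}"
  have J: "finite J" "a \<notin> J" "I = insert a J" "b \<in> J" "T \<subseteq> J - {b}"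
    using I by (auto simp: J_def)
  define Q where "Q y' = (\<integral>z. q y' z \<partial>P)" for y'
  have Q_bounds: "0 \<le> Q y'" "Q y' \<le> 1" if "y' \<in> space P" for y'
    using Pr.integral_kernel_section_bounds[OF q_meas q_nonneg q_le_1 that] by (simp_all add: Q_def)
  have W_meas1[measurable]: "W y \<in> borel_measurable P" if "y \<in> space P" for y
    using measurable_Pair2[OF W_meas that] by simp
  have kernel_int: "has_bochner_integral (PiM J (\<lambda>_. P)) (\<lambda>x. (\<Prod>c\<in>T. q (x b) (x c)) *\<^sub>R h (x b))
      (\<integral>y'. Q y' ^ card T *\<^sub>R h y' \<partial>P)"
    if "h \<in> borel_measurable P" "\<And>y'. \<bar>h y'\<bar> \<le> \<bar>W y y'\<bar>" "y \<in> space P" for h y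
    unfolding Q_def using that W_int[OF that(3)]
    by (intro has_bochner_integral_PiM_prod_kernel_dominated[OF P_prob J(1,4,5) q_meas q_nonneg q_le_1])
  define f where "f \<omega> = ((\<Prod>c\<in>T. q (\<omega> b) (\<omega> c)) * W (\<omega> a) (\<omega> b)) *\<^sub>R V (\<omega> a)" for \<omega>
  have f_upd: "f (x(a := y)) = ((\<Prod>c\<in>T. q (x b) (x c)) * W y (x b)) *\<^sub>R V y" for x y
    using J(2,4,5) by (auto simp: f_def intro!: prod.cong)
  have "has_bochner_integral (PiM (insert a J) (\<lambda>_. P)) f (\<integral>y. (\<integral>y'. Q y' ^ card T * W y y' \<partial>P) *\<^sub>R V y \<partial>P)"
  proof (rule has_bochner_integral_PiM_insert_rev)
    show "f \<in> borel_measurable (PiM (insert a J) (\<lambda>_. P))"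
      unfolding f_def by measurable (use J(4,5) in auto)
    fix y assume y: "y \<in> space P"
    show "has_bochner_integral (PiM J (\<lambda>_. P)) (\<lambda>x. f (x(a := y))) ((\<integral>y'. Q y' ^ card T * W y y' \<partial>P) *\<^sub>R V y)"
      unfolding f_upd using has_bochner_integral_scaleR_left[OF kernel_int[OF W_meas1[OF y] _ y]] by simp
  next
    have "has_bochner_integral (PiM J (\<lambda>_. P)) (\<lambda>x. (\<Prod>c\<in>T. q (x b) (x c)) *\<^sub>R \<bar>W y (x b)\<bar>)
        (\<integral>y'. Q y' ^ card T *\<^sub>R \<bar>W y y'\<bar> \<partial>P)" if "y \<in> space P" for y
      using that by (intro kernel_int) auto
    then have "(\<integral>x. norm (f (x(a := y))) \<partial>PiM J (\<lambda>_. P)) = norm ((\<integral>y'. Q y' ^ card T * \<bar>W y y'\<bar> \<partial>P) *\<^sub>R V y)"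
      if "y \<in> space P" for y
      using that Q_bounds by (simp add: has_bochner_integral_iff f_upd q_nonneg prod_nonneg abs_prod abs_mult integral_nonneg)
    with integrable_norm[OF V_int] show "integrable P (\<lambda>y. \<integral>x. norm (f (x(a := y))) \<partial>PiM J (\<lambda>_. P))"
      unfolding Q_def[symmetric] by (subst Bochner_Integration.integrable_cong[OF refl]) auto
  qed (use J in auto)
  then show ?thesis
    unfolding f_def[abs_def] Q_def J(3) .
qed

section \<open>Ranks of samples\<close>

definition below :: "('a \<Rightarrow> real) \<Rightarrow> 'a \<Rightarrow> 'a \<Rightarrow> real" where
  "below r y y' = (if r y' < r y then 1 else 0)"

lemma below_nonneg: "0 \<le> below r y y'" and below_le_1: "below r y y' \<le> 1"
  by (simp_all add: below_def)

definition sample_rank :: "('a \<Rightarrow> real) \<Rightarrow> nat \<Rightarrow> (nat \<Rightarrow> 'a) \<Rightarrow> nat \<Rightarrow> nat" where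
  "sample_rank r n \<omega> a = card {b \<in> {..<n}. r (\<omega> b) < r (\<omega> a)}"

lemma sum_subsets_prod_indicator:
  assumes "finite J"
  shows "(\<Sum>T | T \<subseteq> J \<and> card T = m. \<Prod>b\<in>T. if Q b then 1 else 0 :: real)
       = real (card {b\<in>J. Q b} choose m)"
proof -
  have "(\<Prod>b\<in>T. if Q b then 1 else 0 :: real) = (if T \<subseteq> {b. Q b} then 1 else 0)" if "T \<subseteq> J" for T
    using finite_subset[OF that assms] by (induction T rule: finite_induct) auto
  then have "(\<Sum>T | T \<subseteq> J \<and> card T = m. \<Prod>b\<in>T. if Q b then 1 else 0 :: real)
      = real (card {T. T \<subseteq> J \<and> card T = m \<and> T \<subseteq> {b. Q b}})"
    using assms by (simp add: sum.If_cases Int_def)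
  also have "{T. T \<subseteq> J \<and> card T = m \<and> T \<subseteq> {b. Q b}} = {T. T \<subseteq> {b\<in>J. Q b} \<and> card T = m}"
    by auto
  also have "card \<dots> = card {b\<in>J. Q b} choose m"
    using assms by (intro n_subsets) simp
  finally show ?thesis .
qed

lemma choose_sample_rank_eq_sum_subsets:
  assumes "\<And>b. b \<in> A \<Longrightarrow> \<not> r (\<omega> b) < r (\<omega> a)"
  shows "real (sample_rank r n \<omega> a choose m)
       = (\<Sum>S | S \<subseteq> {..<n} - A \<and> card S = m. \<Prod>b\<in>S. below r (\<omega> a) (\<omega> b))"
proof -
  have "{b \<in> {..<n}. r (\<omega> b) < r (\<omega> a)} = {b \<in> {..<n} - A. r (\<omega> b) < r (\<omega> a)}"
    using assms by auto
  then show ?thesis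
    unfolding below_def sample_rank_def by (simp add: sum_subsets_prod_indicator)
qed

lemma length_filter_less_nth_strict_sorted:
  fixes xs :: "'a::linorder list"
  assumes "sorted_wrt (<) xs" "j < length xs"
  shows "length (filter (\<lambda>v. v < xs ! j) xs) = j"
proof -
  have "length (filter (\<lambda>v. v < xs ! j) xs) = card {i. i < length xs \<and> xs ! i < xs ! j}"
    by (rule length_filter_conv_card)
  also have "{i. i < length xs \<and> xs ! i < xs ! j} = {..<j}"
    using assms by (auto simp: sorted_wrt_nth_less) (metis not_less_iff_gr_or_eq sorted_wrt_nth_less)
  finally show ?thesis by simp
qed

lemma ordered_sample_sample_rank:
  assumes inj: "inj_on (\<lambda>i. r (\<omega> i)) {..<n}" and a: "a < n"
  shows "sample_rank r n \<omega> a < n \<and> ordered_sample r n \<omega> (sample_rank r n \<omega> a + 1) = \<omega> a"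
proof -
  define xs where "xs = map \<omega> [0..<n]"
  define L where "L = sort_key r xs"
  have mset_L: "mset (map r L) = mset (map r xs)"
    by (simp add: L_def)
  have "distinct (map r xs)"
    using inj by (simp add: xs_def distinct_map comp_def lessThan_atLeast0)
  then have "distinct (map r L)"
    using mset_L by (metis mset_eq_imp_distinct_iff)
  then have "sorted_wrt (<) (map r L)"
    by (simp add: L_def strict_sorted_iff)
  moreover obtain j where j: "j < n" "L ! j = \<omega> a"
    using a by (metis L_def xs_def in_set_conv_nth length_map length_sort diff_zero length_upt
        atLeastLessThan_iff image_eqI le0 set_map set_sort set_upt)
  moreover have "sample_rank r n \<omega> a = length (filter (\<lambda>v. v < r (\<omega> a)) (map r xs))"
    unfolding sample_rank_def length_filter_conv_card xs_def by (intro arg_cong[where f=card]) auto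
  moreover have "\<dots> = length (filter (\<lambda>v. v < r (\<omega> a)) (map r L))"
    using mset_L by (metis mset_filter size_mset)
  ultimately have "sample_rank r n \<omega> a = j"
    using length_filter_less_nth_strict_sorted[of "map r L" j] by (simp add: L_def xs_def)
  then show ?thesis
    using j by (simp add: ordered_sample_def L_def xs_def)
qed

lemma sum_ordered_sample:
  assumes inj: "inj_on (\<lambda>i. r (\<omega> i)) {..<n}"
  shows "(\<Sum>i=1..n. H i (ordered_sample r n \<omega> i)) = (\<Sum>a<n. H (sample_rank r n \<omega> a + 1) (\<omega> a))"
proof -
  let ?\<sigma> = "sample_rank r n \<omega>"
  have "inj_on ?\<sigma> {..<n}"
    using ordered_sample_sample_rank[of r \<omega> n, OF inj] inj by (metis inj_onI inj_on_contraD lessThan_iff)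
  then have bij: "bij_betw ?\<sigma> {..<n} {..<n}"
    using ordered_sample_sample_rank[of r \<omega> n, OF inj] endo_inj_surj[of "{..<n}" ?\<sigma>]
    by (auto simp: bij_betw_def)
  have "(\<Sum>i=1..n. H i (ordered_sample r n \<omega> i)) = (\<Sum>i<n. H (i + 1) (ordered_sample r n \<omega> (i + 1)))"
    by (simp add: sum.atLeast1_atMost_eq)
  also have "\<dots> = (\<Sum>a<n. H (?\<sigma> a + 1) (ordered_sample r n \<omega> (?\<sigma> a + 1)))"
    using sum.reindex_bij_betw[OF bij, of "\<lambda>i. H (i + 1) (ordered_sample r n \<omega> (i + 1))"] by simp
  also have "\<dots> = (\<Sum>a<n. H (?\<sigma> a + 1) (\<omega> a))"
    using ordered_sample_sample_rank[of r \<omega> n, OF inj] by (intro sum.cong) auto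
  finally show ?thesis .
qed

lemma sample_rank_less_iff:
  assumes "b < n"
  shows "sample_rank r n \<omega> b < sample_rank r n \<omega> a \<longleftrightarrow> r (\<omega> b) < r (\<omega> a)"
proof
  assume "r (\<omega> b) < r (\<omega> a)"
  then have "{c \<in> {..<n}. r (\<omega> c) < r (\<omega> b)} \<subset> {c \<in> {..<n}. r (\<omega> c) < r (\<omega> a)}"
    using assms by auto
  then show "sample_rank r n \<omega> b < sample_rank r n \<omega> a"
    unfolding sample_rank_def by (intro psubset_card_mono) auto
next
  assume "sample_rank r n \<omega> b < sample_rank r n \<omega> a"
  moreover have "sample_rank r n \<omega> a \<le> sample_rank r n \<omega> b" if "r (\<omega> a) \<le> r (\<omega> b)"
    unfolding sample_rank_def using that by (intro card_mono) auto
  ultimately show "r (\<omega> b) < r (\<omega> a)"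
    by linarith
qed

lemma sum_ordered_sample_below:
  assumes inj: "inj_on (\<lambda>i. r (\<omega> i)) {..<n}" and a: "a < n"
  shows "(\<Sum>j=1..<sample_rank r n \<omega> a + 1. H j (ordered_sample r n \<omega> j))
       = (\<Sum>b<n. if r (\<omega> b) < r (\<omega> a) then H (sample_rank r n \<omega> b + 1) (\<omega> b) else 0)"
proof -
  let ?\<sigma> = "sample_rank r n \<omega>"
  have "{1..<?\<sigma> a + 1} = {j \<in> {1..n}. j < ?\<sigma> a + 1}"
    using ordered_sample_sample_rank[of r \<omega> n, OF inj a] by auto
  then have "(\<Sum>j=1..<?\<sigma> a + 1. H j (ordered_sample r n \<omega> j))
      = (\<Sum>j=1..n. if j < ?\<sigma> a + 1 then H j (ordered_sample r n \<omega> j) else 0)"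
    by (simp only: sum.inter_filter[OF finite_atLeastAtMost])
  also have "\<dots> = (\<Sum>b<n. if ?\<sigma> b + 1 < ?\<sigma> a + 1 then H (?\<sigma> b + 1) (\<omega> b) else 0)"
    using sum_ordered_sample[of r \<omega> n, OF inj, of "\<lambda>j y. if j < ?\<sigma> a + 1 then H j y else 0"] by simp
  also have "\<dots> = (\<Sum>b<n. if r (\<omega> b) < r (\<omega> a) then H (?\<sigma> b + 1) (\<omega> b) else 0)"
    by (intro sum.cong) (auto simp: sample_rank_less_iff)
  finally show ?thesis .
qed

definition term1_by_subsets :: "('a \<Rightarrow> real) \<Rightarrow> ('a \<Rightarrow> 'p::real_vector) \<Rightarrow> nat \<Rightarrow> nat \<Rightarrow> (nat \<Rightarrow> 'a) \<Rightarrow> 'p" where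
  "term1_by_subsets r s n k \<omega> = (1 / (real n * real ((n - 1) choose (k - 1)))) *\<^sub>R
     (\<Sum>a<n. \<Sum>S | S \<subseteq> {..<n} - {a} \<and> card S = k - 1.
        (\<Prod>b\<in>S. below r (\<omega> a) (\<omega> b)) *\<^sub>R (r (\<omega> a) *\<^sub>R s (\<omega> a)))"

definition term2_by_subsets :: "('a \<Rightarrow> real) \<Rightarrow> ('a \<Rightarrow> 'p::real_vector) \<Rightarrow> nat \<Rightarrow> nat \<Rightarrow> (nat \<Rightarrow> 'a) \<Rightarrow> 'p" where
  "term2_by_subsets r s n k \<omega> = ((real k - 1) / ((real n - 1) * real n * real ((n - 2) choose (k - 2)))) *\<^sub>R
     (\<Sum>a<n. \<Sum>b\<in>{..<n} - {a}. \<Sum>T | T \<subseteq> {..<n} - {a, b} \<and> card T = k - 2.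
        ((\<Prod>c\<in>T. below r (\<omega> b) (\<omega> c)) * (below r (\<omega> a) (\<omega> b) * r (\<omega> b))) *\<^sub>R s (\<omega> a))"

lemma term1_eq_term1_by_subsets:
  assumes inj: "inj_on (\<lambda>i. r (\<omega> i)) {..<n}"
  shows "term1 r s n k \<omega> = term1_by_subsets r s n k \<omega>"
proof -
  let ?\<sigma> = "sample_rank r n \<omega>" and ?C = "real ((n - 1) choose (k - 1))"
  have "(\<Sum>S | S \<subseteq> {..<n} - {a} \<and> card S = k - 1. (\<Prod>b\<in>S. below r (\<omega> a) (\<omega> b)) *\<^sub>R (r (\<omega> a) *\<^sub>R s (\<omega> a)))
      = (r (\<omega> a) * real (?\<sigma> a choose (k - 1))) *\<^sub>R s (\<omega> a)" for a
    using choose_sample_rank_eq_sum_subsets[of "{a}" r \<omega> a n "k - 1"]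
    by (simp add: scaleR_sum_left[symmetric] sum_distrib_left mult.commute)
  moreover have "term1 r s n k \<omega> = (1 / real n) *\<^sub>R (\<Sum>a<n. (r (\<omega> a) * (real (?\<sigma> a choose (k - 1)) / ?C)) *\<^sub>R s (\<omega> a))"
    unfolding term1_def
    using sum_ordered_sample[of r \<omega> n, OF inj, of "\<lambda>i y. (r y * (real ((i - 1) choose (k - 1)) / ?C)) *\<^sub>R s y"]
    by simp
  ultimately show ?thesis
    unfolding term1_by_subsets_def
    by (simp add: scaleR_sum_right divide_inverse ac_simps)
qed

lemma term2_eq_term2_by_subsets:
  assumes inj: "inj_on (\<lambda>i. r (\<omega> i)) {..<n}"
  shows "term2 r s n k \<omega> = term2_by_subsets r s n k \<omega>"
proof -
  let ?\<sigma> = "sample_rank r n \<omega>" and ?C = "real ((n - 2) choose (k - 2))"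
  define h where "h j y = r y * (real ((j - 1) choose (k - 2)) / ?C)" for j y
  define B where "B a b = (\<Sum>T | T \<subseteq> {..<n} - {a, b} \<and> card T = k - 2.
    (\<Prod>c\<in>T. below r (\<omega> b) (\<omega> c)) * (below r (\<omega> a) (\<omega> b) * r (\<omega> b)))" for a b
  have below_term: "(if r (\<omega> b) < r (\<omega> a) then h (?\<sigma> b + 1) (\<omega> b) else 0) = B a b / ?C" for a b
  proof (cases "r (\<omega> b) < r (\<omega> a)")
    case True
    then have "real (?\<sigma> b choose (k - 2))
        = (\<Sum>T | T \<subseteq> {..<n} - {a, b} \<and> card T = k - 2. \<Prod>c\<in>T. below r (\<omega> b) (\<omega> c))"
      by (intro choose_sample_rank_eq_sum_subsets) auto
    moreover have "below r (\<omega> a) (\<omega> b) = 1"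
      using True by (simp add: below_def)
    ultimately show ?thesis
      using True by (simp add: h_def B_def sum_distrib_left mult.commute)
  qed (simp add: B_def below_def)
  have inner: "(\<Sum>j=1..<?\<sigma> a + 1. h j (ordered_sample r n \<omega> j)) = (\<Sum>b\<in>{..<n} - {a}. B a b) / ?C"
    if a: "a < n" for a
  proof -
    have "(\<Sum>j=1..<?\<sigma> a + 1. h j (ordered_sample r n \<omega> j))
        = (\<Sum>b<n. if r (\<omega> b) < r (\<omega> a) then h (?\<sigma> b + 1) (\<omega> b) else 0)"
      by (rule sum_ordered_sample_below[of r \<omega> n, OF inj a])
    also have "\<dots> = (\<Sum>b\<in>{..<n} - {a}. if r (\<omega> b) < r (\<omega> a) then h (?\<sigma> b + 1) (\<omega> b) else 0)"
      using a by (intro sum.mono_neutral_right) auto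
    finally show ?thesis
      by (simp add: below_term sum_divide_distrib)
  qed
  have "term2 r s n k \<omega> = (1 / real n) *\<^sub>R
      (\<Sum>a<n. ((real k - 1) / (real n - 1) * (\<Sum>j=1..<?\<sigma> a + 1. h j (ordered_sample r n \<omega> j))) *\<^sub>R s (\<omega> a))"
    unfolding term2_def h_def
    using sum_ordered_sample[of r \<omega> n, OF inj, of "\<lambda>i y. ((real k - 1) / (real n - 1)
      * (\<Sum>j=1..<i. r (ordered_sample r n \<omega> j) * (real ((j - 1) choose (k - 2)) / ?C))) *\<^sub>R s y"]
    by simp
  also have "\<dots> = (1 / real n) *\<^sub>R
      (\<Sum>a<n. ((real k - 1) / (real n - 1) * ((\<Sum>b\<in>{..<n} - {a}. B a b) / ?C)) *\<^sub>R s (\<omega> a))"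
    using inner by (intro arg_cong[where f="scaleR _"] sum.cong) simp_all
  also have "\<dots> = term2_by_subsets r s n k \<omega>"
    unfolding term2_by_subsets_def
    by (simp add: B_def scaleR_sum_right scaleR_sum_left[symmetric] divide_inverse ac_simps)
  finally show ?thesis .
qed

section \<open>Rewards whose law has no atoms\<close>

lemma obtain_measurable_AE_version:
  fixes s :: "'a \<Rightarrow> 'b::{real_normed_vector,second_countable_topology}"
  assumes "c \<in> borel_measurable M" "(\<lambda>y. c y *\<^sub>R s y) \<in> borel_measurable M" "AE y in M. c y \<noteq> 0"
  obtains s' where "s' \<in> borel_measurable M" "AE y in M. s' y = s y"
proof
  show "(\<lambda>y. inverse (c y) *\<^sub>R (c y *\<^sub>R s y)) \<in> borel_measurable M"
    by (intro borel_measurable_scaleR borel_measurable_inverse assms(1,2))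
  show "AE y in M. inverse (c y) *\<^sub>R (c y *\<^sub>R s y) = s y"
    using assms(3) by eventually_elim simp
qed

locale atomless_reward = prob_space P for P :: "'a measure" +
  fixes r :: "'a \<Rightarrow> real"
  assumes r_measurable[measurable]: "r \<in> borel_measurable P"
    and r_bounded: "\<exists>B. \<forall>y\<in>space P. \<bar>r y\<bar> \<le> B"
    and no_atoms: "\<And>c. measure P {y \<in> space P. r y = c} = 0"
begin

lemma P_le_mono: "r y' \<le> r y \<Longrightarrow> P_le P r y' \<le> P_le P r y"
  unfolding P_le_def by (intro finite_measure_mono) auto

lemma P_le_nonneg: "0 \<le> P_le P r y" and P_le_le_1: "P_le P r y \<le> 1"
  by (simp_all add: P_le_def)

lemma P_le_measurable[measurable]: "P_le P r \<in> borel_measurable P"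
proof -
  have "mono (\<lambda>t. measure P {y' \<in> space P. r y' \<le> t})"
    by (intro monoI finite_measure_mono) auto
  then have "(\<lambda>t. measure P {y' \<in> space P. r y' \<le> t}) \<in> borel_measurable borel"
    by (rule borel_measurable_mono)
  from measurable_compose[OF r_measurable this] show ?thesis
    by (simp add: P_le_def[abs_def])
qed

lemma below_measurable[measurable]: "case_prod (below r) \<in> borel_measurable (P \<Otimes>\<^sub>M P)"
  unfolding below_def[abs_def] by measurable

lemma below_section_measurable[measurable]: "below r y \<in> borel_measurable P"
  unfolding below_def[abs_def] by measurable

lemma integrable_below: "integrable P (below r y)"
  by (intro integrable_const_bound[where B=1]) (auto simp: below_def)

lemma integral_below: "(\<integral>y'. below r y y' \<partial>P) = P_le P r y"
proof -
  have "(\<integral>y'. below r y y' \<partial>P) = (\<integral>y'. indicator {y' \<in> space P. r y' < r y} y' \<partial>P)"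
    by (intro Bochner_Integration.integral_cong) (auto simp: below_def)
  also have "\<dots> = measure P {y' \<in> space P. r y' < r y}"
    by simp
  also have "\<dots> = measure P ({y' \<in> space P. r y' < r y} \<union> {y' \<in> space P. r y' = r y})"
    using no_atoms by (subst finite_measure_Union) auto
  also have "{y' \<in> space P. r y' < r y} \<union> {y' \<in> space P. r y' = r y} = {y' \<in> space P. r y' \<le> r y}"
    by auto
  finally show ?thesis
    by (simp add: P_le_def)
qed

lemma g_fun_eq_integral_below:
  "g_fun P r k y = (\<integral>y'. P_le P r y' ^ (k - 2) * (below r y y' * r y') \<partial>P)"
  unfolding g_fun_def by (intro Bochner_Integration.integral_cong) (auto simp: below_def)

lemma g_fun_measurable[measurable]: "g_fun P r k \<in> borel_measurable P"
  unfolding g_fun_eq_integral_below[abs_def] by (rule borel_measurable_lebesgue_integral) simp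

lemma integrable_P_le_below_reward:
  "integrable P (\<lambda>y'. P_le P r y' ^ j * (below r y y' * r y'))"
  "integrable P (\<lambda>y'. P_le P r y' ^ j * \<bar>below r y y' * r y'\<bar>)"
proof -
  obtain B where B: "\<And>y'. y' \<in> space P \<Longrightarrow> \<bar>r y'\<bar> \<le> B"
    using r_bounded by blast
  have "\<bar>P_le P r y' ^ j * (below r y y' * r y')\<bar> \<le> 1 * (1 * B)" if "y' \<in> space P" for y'
    unfolding abs_mult using B[OF that]
    by (intro mult_mono) (auto simp: P_le_nonneg P_le_le_1 power_le_one below_def)
  then show "integrable P (\<lambda>y'. P_le P r y' ^ j * (below r y y' * r y'))"
    "integrable P (\<lambda>y'. P_le P r y' ^ j * \<bar>below r y y' * r y'\<bar>)"
    by (auto intro!: integrable_const_bound[where B=B] simp: abs_mult P_le_nonneg)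
qed

lemma null_sets_P_le_eq_0: "{y \<in> space P. P_le P r y = 0} \<in> null_sets P"
proof -
  define Z where "Z = {y \<in> space P. P_le P r y = 0}"
  have "Z \<in> null_sets P"
  proof (cases "Z = {}")
    case False
    define u where "u = Sup (r ` Z)"
    have "bdd_above (r ` Z)"
      using r_bounded by (force simp: Z_def abs_le_iff)
    then have r_le_u: "r y \<le> u" if "y \<in> Z" for y
      using that by (auto simp: u_def intro: cSup_upper)
    have null_below: "{y \<in> space P. r y \<le> u - 1 / Suc j} \<in> null_sets P" for j :: nat
    proof -
      obtain z where z: "z \<in> Z" "u - 1 / Suc j < r z"
        using less_cSup_iff[OF _ \<open>bdd_above (r ` Z)\<close>, of "u - 1 / Suc j"] False
        by (auto simp: u_def)
      have "measure P {y \<in> space P. r y \<le> u - 1 / Suc j} \<le> P_le P r z"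
        unfolding P_le_def using z by (intro finite_measure_mono) auto
      with z(1) show ?thesis
        by (intro null_setsI) (auto simp: Z_def emeasure_eq_measure intro: antisym)
    qed
    have "Z \<subseteq> (\<Union>j. {y \<in> space P. r y \<le> u - 1 / Suc j}) \<union> {y \<in> space P. r y = u}"
    proof
      fix y assume y: "y \<in> Z"
      show "y \<in> (\<Union>j. {y \<in> space P. r y \<le> u - 1 / Suc j}) \<union> {y \<in> space P. r y = u}"
      proof (cases "r y = u")
        case False
        with r_le_u[OF y] obtain j :: nat where "1 / Suc j < u - r y"
          by (metis diff_gt_0_iff_gt nat_approx_posE order_le_imp_less_or_eq)
        then have "r y \<le> u - 1 / Suc j"
          by simp
        then show ?thesis
          using y by (auto simp: Z_def)
      qed (use y in \<open>auto simp: Z_def\<close>)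
    qed
    moreover have "{y \<in> space P. r y = u} \<in> null_sets P"
      using no_atoms by (intro null_setsI) (auto simp: emeasure_eq_measure)
    ultimately show ?thesis
      using null_below by (intro null_sets_subset[of _ _ Z]) (auto simp: Z_def)
  qed simp
  then show ?thesis
    by (simp only: Z_def)
qed

lemma AE_P_le_pos: "AE y in P. 0 < P_le P r y"
  by (rule AE_I'[OF null_sets_P_le_eq_0]) (auto simp: order_less_le P_le_nonneg)

lemma AE_reward_P_le_nonzero: "AE y in P. r y * P_le P r y ^ m \<noteq> 0"
proof -
  have "AE y in P. r y \<noteq> 0"
    using no_atoms[of 0] by (intro AE_I'[of "{y \<in> space P. r y = 0}"]) (auto simp: emeasure_eq_measure)
  with AE_P_le_pos show ?thesis
    by eventually_elim simp
qed

text \<open>The score s need not be measurable, but its product with the weight r F^(k-1) is, and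
  that weight vanishes only on a null set; dividing by it yields a measurable version of s.\<close>

lemma obtain_measurable_version_of_score:
  fixes s :: "'a \<Rightarrow> 'b::{real_normed_vector,second_countable_topology}"
  assumes "integrable P (\<lambda>y. (r y * P_le P r y ^ m) *\<^sub>R s y)"
  obtains s' where "s' \<in> borel_measurable P" "AE y in P. s' y = s y"
proof -
  have "(\<lambda>y. r y * P_le P r y ^ m) \<in> borel_measurable P"
    by measurable
  from obtain_measurable_AE_version[OF this borel_measurable_integrable[OF assms] AE_reward_P_le_nonzero]
  show ?thesis
    using that by blast
qed

lemma AE_PiM_inj_rewards:
  assumes I: "finite I"
  shows "AE \<omega> in PiM I (\<lambda>_. P). inj_on (\<lambda>i. r (\<omega> i)) I"
proof -
  define e where "e y y' = (if r y' = r y then 1 else 0 :: real)" for y y'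
  have "AE \<omega> in PiM I (\<lambda>_. P). e (\<omega> a) (\<omega> b) = 0" if ab: "a \<in> I" "b \<in> I" "a \<noteq> b" for a b
  proof -
    have "(\<integral>y'. e y y' \<partial>P) = 0" for y
    proof -
      have "(\<integral>y'. e y y' \<partial>P) = (\<integral>y'. indicator {y' \<in> space P. r y' = r y} y' \<partial>P)"
        by (intro Bochner_Integration.integral_cong) (auto simp: e_def)
      then show ?thesis
        using no_atoms by simp
    qed
    moreover have "case_prod e \<in> borel_measurable (P \<Otimes>\<^sub>M P)"
      unfolding e_def[abs_def] by measurable
    ultimately have "has_bochner_integral (PiM I (\<lambda>_. P)) (\<lambda>\<omega>. e (\<omega> a) (\<omega> b)) 0"
      using has_bochner_integral_PiM_prod_kernel[of P I a "{b}" e "\<lambda>_. 1 :: real"] prob_space_axioms I ab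
      by (simp add: e_def)
    then show ?thesis
      by (subst integral_nonneg_eq_0_iff_AE[symmetric]) (auto simp: has_bochner_integral_iff e_def)
  qed
  then have "AE \<omega> in PiM I (\<lambda>_. P). \<forall>a\<in>I. \<forall>b\<in>I. a \<noteq> b \<longrightarrow> e (\<omega> a) (\<omega> b) = 0"
    using I by (intro AE_finite_allI) auto
  then show ?thesis
    by eventually_elim (auto simp: inj_on_def e_def split: if_splits)
qed

lemma AE_PiM_term_eq_term_by_subsets:
  assumes "AE y in P. s' y = s y"
  shows "AE \<omega> in PiM {..<n} (\<lambda>_. P).
           term1 r s n k \<omega> = term1_by_subsets r s' n k \<omega> \<and> term2 r s n k \<omega> = term2_by_subsets r s' n k \<omega>"
proof -
  have "AE \<omega> in PiM {..<n} (\<lambda>_. P). \<forall>a\<in>{..<n}. s (\<omega> a) = s' (\<omega> a)"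
    using assms prob_space_axioms by (intro AE_finite_allI AE_PiM_component) auto
  with AE_PiM_inj_rewards[OF finite_lessThan] show ?thesis
  proof eventually_elim
    case (elim \<omega>)
    then have "term1_by_subsets r s n k \<omega> = term1_by_subsets r s' n k \<omega>"
      "term2_by_subsets r s n k \<omega> = term2_by_subsets r s' n k \<omega>"
      by (simp_all add: term1_by_subsets_def term2_by_subsets_def)
    with elim show ?case
      by (simp add: term1_eq_term1_by_subsets term2_eq_term2_by_subsets)
  qed
qed

lemma has_bochner_integral_term1_by_subsets:
  fixes V :: "'a \<Rightarrow> 'b::{banach,second_countable_topology}"
  assumes n: "0 < n" "k \<le> n"
    and V_meas[measurable]: "V \<in> borel_measurable P"
    and V_int: "integrable P (\<lambda>y. (r y * P_le P r y ^ (k - 1)) *\<^sub>R V y)"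
  shows "has_bochner_integral (PiM {..<n} (\<lambda>_. P)) (term1_by_subsets r V n k)
           (\<integral>y. (r y * P_le P r y ^ (k - 1)) *\<^sub>R V y \<partial>P)"
proof -
  let ?E = "\<integral>y. (r y * P_le P r y ^ (k - 1)) *\<^sub>R V y \<partial>P" and ?C = "real ((n - 1) choose (k - 1))"
  define Sub where "Sub a = {S. S \<subseteq> {..<n} - {a} \<and> card S = k - 1}" for a
  have "has_bochner_integral (PiM {..<n} (\<lambda>_. P))
      (\<lambda>\<omega>. (\<Prod>b\<in>S. below r (\<omega> a) (\<omega> b)) *\<^sub>R (r (\<omega> a) *\<^sub>R V (\<omega> a))) ?E"
    if "a < n" "S \<in> Sub a" for a S
    using has_bochner_integral_PiM_prod_kernel[of P "{..<n}" a S "below r" "\<lambda>y. r y *\<^sub>R V y"]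
      prob_space_axioms V_int that
    by (simp add: Sub_def integral_below below_nonneg below_le_1 mult.commute)
  then have "has_bochner_integral (PiM {..<n} (\<lambda>_. P))
      (\<lambda>\<omega>. \<Sum>a<n. \<Sum>S\<in>Sub a. (\<Prod>b\<in>S. below r (\<omega> a) (\<omega> b)) *\<^sub>R (r (\<omega> a) *\<^sub>R V (\<omega> a)))
      (\<Sum>a<n. \<Sum>S\<in>Sub a. ?E)"
    by (intro has_bochner_integral_sum) auto
  moreover have "card (Sub a) = (n - 1) choose (k - 1)" if "a < n" for a
    using that by (simp add: Sub_def n_subsets card_Diff_singleton)
  then have "(\<Sum>a<n. \<Sum>S\<in>Sub a. ?E) = (real n * ?C) *\<^sub>R ?E"
    by (simp add: sum_constant_scaleR)
  ultimately have "has_bochner_integral (PiM {..<n} (\<lambda>_. P))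
      (\<lambda>\<omega>. \<Sum>a<n. \<Sum>S\<in>Sub a. (\<Prod>b\<in>S. below r (\<omega> a) (\<omega> b)) *\<^sub>R (r (\<omega> a) *\<^sub>R V (\<omega> a)))
      ((real n * ?C) *\<^sub>R ?E)"
    by simp
  then have "has_bochner_integral (PiM {..<n} (\<lambda>_. P)) (term1_by_subsets r V n k)
      ((1 / (real n * ?C)) *\<^sub>R ((real n * ?C) *\<^sub>R ?E))"
    unfolding term1_by_subsets_def[abs_def] Sub_def by (rule has_bochner_integral_scaleR_right)
  moreover have "?C > 0"
    using n by simp
  ultimately show ?thesis
    using n by simp
qed

lemma integral_term1:
  fixes s :: "'a \<Rightarrow> 'b::{banach,second_countable_topology}"
  assumes n: "0 < n" "k \<le> n"
    and term_int: "integrable (PiM {..<n} (\<lambda>_. P)) (term1 r s n k)"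
    and c_int: "integrable P (\<lambda>y. (r y * P_le P r y ^ (k - 1)) *\<^sub>R s y)"
  shows "(\<integral>\<omega>. term1 r s n k \<omega> \<partial>PiM {..<n} (\<lambda>_. P)) = (\<integral>y. (r y * P_le P r y ^ (k - 1)) *\<^sub>R s y \<partial>P)"
proof -
  obtain s' where s'_meas[measurable]: "s' \<in> borel_measurable P" and s'_eq: "AE y in P. s' y = s y"
    using c_int by (rule obtain_measurable_version_of_score)
  have c_eq: "AE y in P. (r y * P_le P r y ^ (k - 1)) *\<^sub>R s' y = (r y * P_le P r y ^ (k - 1)) *\<^sub>R s y"
    using s'_eq by eventually_elim simp
  have "integrable P (\<lambda>y. (r y * P_le P r y ^ (k - 1)) *\<^sub>R s' y)"
    using c_int by (subst integrable_cong_AE[OF _ _ c_eq]) (auto simp: borel_measurable_integrable)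
  then have lim: "has_bochner_integral (PiM {..<n} (\<lambda>_. P)) (term1_by_subsets r s' n k)
      (\<integral>y. (r y * P_le P r y ^ (k - 1)) *\<^sub>R s' y \<partial>P)"
    by (rule has_bochner_integral_term1_by_subsets[OF n s'_meas])
  have "(\<integral>\<omega>. term1 r s n k \<omega> \<partial>PiM {..<n} (\<lambda>_. P)) = (\<integral>\<omega>. term1_by_subsets r s' n k \<omega> \<partial>PiM {..<n} (\<lambda>_. P))"
    using term_int lim AE_PiM_term_eq_term_by_subsets[OF s'_eq, of n k]
    by (intro integral_cong_AE) (auto simp: has_bochner_integral_iff)
  also have "\<dots> = (\<integral>y. (r y * P_le P r y ^ (k - 1)) *\<^sub>R s' y \<partial>P)"
    using lim by (simp add: has_bochner_integral_iff)
  also have "\<dots> = (\<integral>y. (r y * P_le P r y ^ (k - 1)) *\<^sub>R s y \<partial>P)"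
    using c_int c_eq by (intro integral_cong_AE) auto
  finally show ?thesis .
qed

lemma integral_abs_below_reward_le:
  "(\<integral>y'. P_le P r y' ^ j * \<bar>below r y y' * r y'\<bar> \<partial>P)
     \<le> \<bar>\<integral>y'. P_le P r y' ^ j * (below r y y' * r y') \<partial>P\<bar> + 2 * \<bar>r y * P_le P r y ^ Suc j\<bar>"
proof -
  let ?F = "P_le P r"
  have "(\<integral>y'. ?F y' ^ j * \<bar>below r y y' * r y'\<bar> \<partial>P) + (\<integral>y'. ?F y' ^ j * (below r y y' * r y') \<partial>P)
      = (\<integral>y'. ?F y' ^ j * \<bar>below r y y' * r y'\<bar> + ?F y' ^ j * (below r y y' * r y') \<partial>P)"
    by (intro Bochner_Integration.integral_add[symmetric] integrable_P_le_below_reward)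
  also have "\<dots> \<le> (\<integral>y'. (2 * max (r y) 0 * ?F y ^ j) * below r y y' \<partial>P)"
  proof (intro integral_mono)
    fix y'
    show "?F y' ^ j * \<bar>below r y y' * r y'\<bar> + ?F y' ^ j * (below r y y' * r y')
        \<le> (2 * max (r y) 0 * ?F y ^ j) * below r y y'"
    proof (cases "r y' < r y")
      case True
      then have "?F y' ^ j * (\<bar>r y'\<bar> + r y') \<le> ?F y ^ j * (2 * max (r y) 0)"
        by (intro mult_mono power_mono P_le_mono) (auto simp: P_le_nonneg)
      with True show ?thesis
        by (simp add: below_def algebra_simps)
    qed (simp add: below_def)
  qed (auto intro: integrable_below integrable_P_le_below_reward)
  also have "\<dots> = 2 * (max (r y) 0 * (?F y ^ j * ?F y))"
    by (simp add: integral_below)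
  also have "\<dots> \<le> 2 * (\<bar>r y\<bar> * (?F y ^ j * ?F y))"
    by (intro mult_left_mono mult_right_mono) (auto simp: P_le_nonneg)
  also have "\<dots> = 2 * \<bar>r y * ?F y ^ Suc j\<bar>"
    by (simp add: abs_mult P_le_nonneg mult.commute)
  finally show ?thesis
    by linarith
qed

lemma integrable_integral_abs_below_reward:
  fixes V :: "'a \<Rightarrow> 'b::{banach,second_countable_topology}"
  assumes V_meas[measurable]: "V \<in> borel_measurable P"
    and "integrable P (\<lambda>y. (r y * P_le P r y ^ Suc j) *\<^sub>R V y)"
    and "integrable P (\<lambda>y. (\<integral>y'. P_le P r y' ^ j * (below r y y' * r y') \<partial>P) *\<^sub>R V y)"
  shows "integrable P (\<lambda>y. (\<integral>y'. P_le P r y' ^ j * \<bar>below r y y' * r y'\<bar> \<partial>P) *\<^sub>R V y)"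
proof (rule Bochner_Integration.integrable_bound)
  show "integrable P (\<lambda>y. norm ((\<integral>y'. P_le P r y' ^ j * (below r y y' * r y') \<partial>P) *\<^sub>R V y)
      + 2 * norm ((r y * P_le P r y ^ Suc j) *\<^sub>R V y))"
    using assms(2,3) by (intro Bochner_Integration.integrable_add integrable_mult_right integrable_norm)
  have "(\<integral>y'. P_le P r y' ^ j * \<bar>below r y y' * r y'\<bar> \<partial>P) * norm (V y)
      \<le> (\<bar>\<integral>y'. P_le P r y' ^ j * (below r y y' * r y') \<partial>P\<bar> + 2 * \<bar>r y * P_le P r y ^ Suc j\<bar>) * norm (V y)"
    for y
    using integral_abs_below_reward_le[of j y] by (rule mult_right_mono) simp
  then show "AE y in P. norm ((\<integral>y'. P_le P r y' ^ j * \<bar>below r y y' * r y'\<bar> \<partial>P) *\<^sub>R V y)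
      \<le> norm (norm ((\<integral>y'. P_le P r y' ^ j * (below r y y' * r y') \<partial>P) *\<^sub>R V y)
        + 2 * norm ((r y * P_le P r y ^ Suc j) *\<^sub>R V y))"
    by (intro AE_I2) (simp add: integral_nonneg P_le_nonneg algebra_simps)
qed measurable

lemma has_bochner_integral_term2_by_subsets:
  fixes V :: "'a \<Rightarrow> 'b::{banach,second_countable_topology}"
  assumes k: "2 \<le> k" "k \<le> n"
    and V_meas[measurable]: "V \<in> borel_measurable P"
    and c_int: "integrable P (\<lambda>y. (r y * P_le P r y ^ (k - 1)) *\<^sub>R V y)"
    and g_int: "integrable P (\<lambda>y. ((real k - 1) * g_fun P r k y) *\<^sub>R V y)"
  shows "has_bochner_integral (PiM {..<n} (\<lambda>_. P)) (term2_by_subsets r V n k)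
           (\<integral>y. ((real k - 1) * g_fun P r k y) *\<^sub>R V y \<partial>P)"
proof -
  let ?F = "P_le P r" and ?C = "real ((n - 2) choose (k - 2))"
  let ?E = "\<integral>y. g_fun P r k y *\<^sub>R V y \<partial>P"
  define W where "W y y' = below r y y' * r y'" for y y'
  have W_meas[measurable]: "case_prod W \<in> borel_measurable (P \<Otimes>\<^sub>M P)"
    unfolding W_def below_def[abs_def] by measurable
  have W_int: "integrable P (W y)" for y
    using integrable_P_le_below_reward(1)[of 0 y] by (simp add: W_def[abs_def])
  have g_eq: "g_fun P r k y = (\<integral>y'. ?F y' ^ (k - 2) * W y y' \<partial>P)" for y
    unfolding W_def by (rule g_fun_eq_integral_below)
  have g_V_int: "integrable P (\<lambda>y. g_fun P r k y *\<^sub>R V y)"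
    using integrable_scaleR_right[OF g_int, of "1 / (real k - 1)"] k by simp
  have "Suc (k - 2) = k - 1"
    using k by simp
  then have abs_V_int: "integrable P (\<lambda>y. (\<integral>y'. ?F y' ^ (k - 2) * \<bar>W y y'\<bar> \<partial>P) *\<^sub>R V y)"
    using integrable_integral_abs_below_reward[OF V_meas, of "k - 2"] c_int g_V_int
    by (simp add: W_def g_fun_eq_integral_below)
  define Sub where "Sub a b = {T. T \<subseteq> {..<n} - {a, b} \<and> card T = k - 2}" for a b
  have "has_bochner_integral (PiM {..<n} (\<lambda>_. P))
      (\<lambda>\<omega>. ((\<Prod>c\<in>T. below r (\<omega> b) (\<omega> c)) * W (\<omega> a) (\<omega> b)) *\<^sub>R V (\<omega> a)) ?E"
    if "a < n" "b \<in> {..<n} - {a}" "T \<in> Sub a b" for a b T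
    using has_bochner_integral_PiM_prod_kernel_pair[of P "{..<n}" a b T "below r" W V]
      prob_space_axioms abs_V_int that
    by (simp add: Sub_def integral_below below_nonneg below_le_1 g_eq W_int)
  then have "has_bochner_integral (PiM {..<n} (\<lambda>_. P))
      (\<lambda>\<omega>. \<Sum>a<n. \<Sum>b\<in>{..<n} - {a}. \<Sum>T\<in>Sub a b. ((\<Prod>c\<in>T. below r (\<omega> b) (\<omega> c)) * W (\<omega> a) (\<omega> b)) *\<^sub>R V (\<omega> a))
      (\<Sum>a<n. \<Sum>b\<in>{..<n} - {a}. \<Sum>T\<in>Sub a b. ?E)"
    by (intro has_bochner_integral_sum) auto
  moreover have "card (Sub a b) = (n - 2) choose (k - 2)" if "a < n" "b \<in> {..<n} - {a}" for a b
    using that by (simp add: Sub_def n_subsets card_Diff_subset numeral_2_eq_2)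
  then have "(\<Sum>a<n. \<Sum>b\<in>{..<n} - {a}. \<Sum>T\<in>Sub a b. ?E) = (real n * (real n - 1) * ?C) *\<^sub>R ?E"
    using k by (simp add: sum_constant_scaleR)
  ultimately have "has_bochner_integral (PiM {..<n} (\<lambda>_. P)) (term2_by_subsets r V n k)
      (((real k - 1) / ((real n - 1) * real n * ?C)) *\<^sub>R ((real n * (real n - 1) * ?C) *\<^sub>R ?E))"
    unfolding term2_by_subsets_def[abs_def] Sub_def W_def by (intro has_bochner_integral_scaleR_right) simp
  moreover have "(real k - 1) / ((real n - 1) * real n * ?C) * (real n * (real n - 1) * ?C) = real k - 1"
    using k by (simp add: field_simps)
  moreover have "(\<integral>y. ((real k - 1) * g_fun P r k y) *\<^sub>R V y \<partial>P) = (real k - 1) *\<^sub>R ?E"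
    by (simp flip: scaleR_scaleR)
  ultimately show ?thesis
    by simp
qed

lemma integral_term2:
  fixes s :: "'a \<Rightarrow> 'b::{banach,second_countable_topology}"
  assumes k: "2 \<le> k" "k \<le> n"
    and term_int: "integrable (PiM {..<n} (\<lambda>_. P)) (term2 r s n k)"
    and c_int: "integrable P (\<lambda>y. (r y * P_le P r y ^ (k - 1)) *\<^sub>R s y)"
    and g_int: "integrable P (\<lambda>y. ((real k - 1) * g_fun P r k y) *\<^sub>R s y)"
  shows "(\<integral>\<omega>. term2 r s n k \<omega> \<partial>PiM {..<n} (\<lambda>_. P)) = (\<integral>y. ((real k - 1) * g_fun P r k y) *\<^sub>R s y \<partial>P)"
proof -
  obtain s' where s'_meas[measurable]: "s' \<in> borel_measurable P" and s'_eq: "AE y in P. s' y = s y"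
    using c_int by (rule obtain_measurable_version_of_score)
  have c_eq: "AE y in P. (r y * P_le P r y ^ (k - 1)) *\<^sub>R s' y = (r y * P_le P r y ^ (k - 1)) *\<^sub>R s y"
    and g_eq: "AE y in P. ((real k - 1) * g_fun P r k y) *\<^sub>R s' y = ((real k - 1) * g_fun P r k y) *\<^sub>R s y"
    using s'_eq by (eventually_elim, simp)+
  have "integrable P (\<lambda>y. (r y * P_le P r y ^ (k - 1)) *\<^sub>R s' y)"
    using c_int by (subst integrable_cong_AE[OF _ _ c_eq]) auto
  moreover have "integrable P (\<lambda>y. ((real k - 1) * g_fun P r k y) *\<^sub>R s' y)"
    using g_int by (subst integrable_cong_AE[OF _ _ g_eq]) auto
  ultimately have lim: "has_bochner_integral (PiM {..<n} (\<lambda>_. P)) (term2_by_subsets r s' n k)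
      (\<integral>y. ((real k - 1) * g_fun P r k y) *\<^sub>R s' y \<partial>P)"
    by (rule has_bochner_integral_term2_by_subsets[OF k s'_meas])
  have "(\<integral>\<omega>. term2 r s n k \<omega> \<partial>PiM {..<n} (\<lambda>_. P)) = (\<integral>\<omega>. term2_by_subsets r s' n k \<omega> \<partial>PiM {..<n} (\<lambda>_. P))"
    using term_int lim AE_PiM_term_eq_term_by_subsets[OF s'_eq, of n k]
    by (intro integral_cong_AE) (auto simp: has_bochner_integral_iff)
  also have "\<dots> = (\<integral>y. ((real k - 1) * g_fun P r k y) *\<^sub>R s' y \<partial>P)"
    using lim by (simp add: has_bochner_integral_iff)
  also have "\<dots> = (\<integral>y. ((real k - 1) * g_fun P r k y) *\<^sub>R s y \<partial>P)"
    using g_int g_eq by (intro integral_cong_AE) auto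
  finally show ?thesis .
qed

end

lemma atomless_reward_policy:
  assumes "p \<theta> x \<in> borel_measurable M" "(\<integral>\<^sup>+ y. ennreal (p \<theta> x y) \<partial>M) = 1"
    and "R x \<in> borel_measurable M" "\<exists>B. \<forall>y. \<bar>R x y\<bar> \<le> B"
    and "\<And>c. measure (policy M p \<theta> x) {y \<in> space M. R x y = c} = 0"
  shows "atomless_reward (policy M p \<theta> x) (R x)"
proof (intro atomless_reward.intro atomless_reward_axioms.intro)
  show "prob_space (policy M p \<theta> x)"
    using assms(1,2) by (intro prob_spaceI) (simp add: policy_def emeasure_density)
  show "R x \<in> borel_measurable (policy M p \<theta> x)"
    using assms(3) by (simp add: policy_def)
qed (use assms(4,5) in \<open>auto simp: policy_def\<close>)

lemma G_hat_eq_term1_minus_term2: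
  "G_hat r s n k \<omega> = real k *\<^sub>R (term1 r s n k \<omega> - term2 r s n k \<omega>)"
  unfolding G_hat_def term1_def term2_def
  by (simp add: scaleR_diff_left sum_subtractf scaleR_diff_right scaleR_sum_right)

theorem mainTheorem2:
  fixes M :: "'a measure"
    and p :: "'p::euclidean_space \<Rightarrow> 'x \<Rightarrow> 'a \<Rightarrow> real"
    and R :: "'x \<Rightarrow> 'a \<Rightarrow> real"
    and \<theta> :: "'p" and x :: "'x"
    and s :: "'a \<Rightarrow> 'p"
    and n k :: nat
  assumes sigma: "sigma_finite_measure M"
    and dens_meas: "\<And>t. p t x \<in> borel_measurable M"
    and dens_nonneg: "\<And>t y. y \<in> space M \<Longrightarrow> 0 \<le> p t x y"
    and dens_prob: "\<And>t. (\<integral>\<^sup>+ y. ennreal (p t x y) \<partial>M) = 1"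
    and dens_diff: "\<And>y. y \<in> space M \<Longrightarrow> (\<lambda>t. p t x y) differentiable (at \<theta>)"
    and score: "\<And>y. y \<in> space M \<Longrightarrow> 0 < p \<theta> x y \<Longrightarrow> GDERIV (\<lambda>t. ln (p t x y)) \<theta> :> s y"
    and R_meas: "R x \<in> borel_measurable M"
    and R_bounded: "\<exists>B. \<forall>y. \<bar>R x y\<bar> \<le> B"
    and nk: "2 \<le> k" "k \<le> n"
    and no_atoms: "\<And>c. measure (policy M p \<theta> x) {y \<in> space M. R x y = c} = 0"
    and int1: "integrable (PiM {..<n} (\<lambda>_. policy M p \<theta> x)) (term1 (R x) s n k)"
    and int2: "integrable (PiM {..<n} (\<lambda>_. policy M p \<theta> x)) (term2 (R x) s n k)"
    and int3: "integrable (PiM {..<n} (\<lambda>_. policy M p \<theta> x)) (G_hat (R x) s n k)"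
    and int4: "integrable (policy M p \<theta> x)
                 (\<lambda>y. (R x y * P_le (policy M p \<theta> x) (R x) y ^ (k - 1)) *\<^sub>R s y)"
    and int5: "integrable (policy M p \<theta> x)
                 (\<lambda>y. ((real k - 1) * g_fun (policy M p \<theta> x) (R x) k y) *\<^sub>R s y)"
    and int6: "integrable (policy M p \<theta> x)
                 (\<lambda>y. (R x y * P_le (policy M p \<theta> x) (R x) y ^ (k - 1)
                        - (real k - 1) * g_fun (policy M p \<theta> x) (R x) k y) *\<^sub>R s y)"
  shows "(\<integral>\<omega>. term1 (R x) s n k \<omega> \<partial>(PiM {..<n} (\<lambda>_. policy M p \<theta> x)))
           = (\<integral>y. (R x y * P_le (policy M p \<theta> x) (R x) y ^ (k - 1)) *\<^sub>R s y \<partial>(policy M p \<theta> x))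
       \<and> (\<integral>\<omega>. term2 (R x) s n k \<omega> \<partial>(PiM {..<n} (\<lambda>_. policy M p \<theta> x)))
           = (\<integral>y. ((real k - 1) * g_fun (policy M p \<theta> x) (R x) k y) *\<^sub>R s y \<partial>(policy M p \<theta> x))
       \<and> (\<integral>\<omega>. G_hat (R x) s n k \<omega> \<partial>(PiM {..<n} (\<lambda>_. policy M p \<theta> x)))
           = real k *\<^sub>R (\<integral>y. (R x y * P_le (policy M p \<theta> x) (R x) y ^ (k - 1)
                        - (real k - 1) * g_fun (policy M p \<theta> x) (R x) k y) *\<^sub>R s y \<partial>(policy M p \<theta> x))"
proof -
  \<comment> \<open>The identities hold for every s.\<close>
  let ?P = "policy M p \<theta> x"
  interpret atomless_reward ?P "R x"
    using dens_meas dens_prob R_meas R_bounded no_atoms by (rule atomless_reward_policy)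
  have term1: "(\<integral>\<omega>. term1 (R x) s n k \<omega> \<partial>PiM {..<n} (\<lambda>_. ?P))
      = (\<integral>y. (R x y * P_le ?P (R x) y ^ (k - 1)) *\<^sub>R s y \<partial>?P)"
    using nk int1 int4 by (intro integral_term1) auto
  have term2: "(\<integral>\<omega>. term2 (R x) s n k \<omega> \<partial>PiM {..<n} (\<lambda>_. ?P))
      = (\<integral>y. ((real k - 1) * g_fun ?P (R x) k y) *\<^sub>R s y \<partial>?P)"
    using nk int2 int4 int5 by (intro integral_term2) auto
  show ?thesis
    using term1 term2 int1 int2 int4 int5 by (simp add: G_hat_eq_term1_minus_term2 scaleR_diff_left)
qed

end
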